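(* Let $n\ge 2$ and let $D$ be an $n\times n$ unit spherical Euclidean distance matrix (EDM) of embedding dimension $r$ such that every off-diagonal entry of $D$ is $\ge 2$. Define $\Delta$ by $D = 2(E-I)+2\Delta$ and let $w\in\mathbb{R}^n$ satisfy $Dw=e$. If $\Delta$ is irreducible, then $r=n-1$ (i.e., $D$ is the EDM of a simplex) and $w>\mathbf{0}$ (every entry of $w$ is positive).
   Context: $e$ denotes the all-ones vector in $\mathbb{R}^n$, $E$ the $n\times n$ all-ones matrix, $I$ the identity matrix. An $n\times n$ matrix $D=(d_{ij})$ is a Euclidean distance matrix (EDM) if there exist points $p^1,\dots,p^n$ in some Euclidean space with $d_{ij}=\|p^i-p^j\|^2$; the dimension of the affine span of these points is the embedding dimension of $D$; $D$ is the EDM of a simplex if its embedding dimension is $n-1$. $D$ is a unit spherical EDM if such points can be chosen on a sphere of radius $1$. A nonnegative $n\times n$ matrix $A$ is reducible if $A$ is the $1\times 1$ zero matrix, or $n\ge 2$ and there is a permutation matrix $Q$ with $QAQ^T=\begin{pmatrix}A_{11}&A_{12}\\ \mathbf{0}&A_{22}\end{pmatrix}$ with $A_{11},A_{22}$ square; otherwise $A$ is irreducible. *)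

theory Defs
  imports "HOL-Analysis.Analysis"
begin

text \<open>Points realizing an EDM are taken in real^'n: any n points of any Euclidean space
  (and any sphere through them) embed isometrically into R^n, so this is no restriction.\<close>

definition realizes_edm :: "('n::finite \<Rightarrow> real ^ 'n) \<Rightarrow> real ^ 'n ^ 'n \<Rightarrow> bool" where
  "realizes_edm p D \<longleftrightarrow> (\<forall>i j. D $ i $ j = (norm (p i - p j))\<^sup>2)"

definition is_edm :: "real ^ 'n ^ 'n \<Rightarrow> bool" where
  "is_edm D \<longleftrightarrow> (\<exists>p :: 'n::finite \<Rightarrow> real ^ 'n. realizes_edm p D)"

definition is_unit_spherical_edm :: "real ^ 'n ^ 'n \<Rightarrow> bool" where
  "is_unit_spherical_edm D \<longleftrightarrow>
     (\<exists>(p :: 'n::finite \<Rightarrow> real ^ 'n) c. realizes_edm p D \<and> (\<forall>i. dist c (p i) = 1))"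

definition edm_embedding_dim :: "real ^ 'n ^ 'n \<Rightarrow> int" where
  "edm_embedding_dim D = aff_dim (range (SOME p :: 'n::finite \<Rightarrow> real ^ 'n. realizes_edm p D))"

text \<open>The permutation is
  encoded by a bijection f from the index type onto positions {0..<n}.\<close>
definition reducible :: "real ^ 'n ^ 'n \<Rightarrow> bool" where
  "reducible A \<longleftrightarrow>
     (CARD('n::finite) = 1 \<and> A = 0) \<or>
     (CARD('n) \<ge> 2 \<and> (\<exists>f :: 'n \<Rightarrow> nat. \<exists>k. bij_betw f UNIV {0..<CARD('n)} \<and> 0 < k \<and> k < CARD('n) \<and>
        (\<forall>i j. k \<le> f i \<and> f j < k \<longrightarrow> A $ i $ j = 0)))"

definition irreducible_mat :: "real ^ 'n ^ 'n \<Rightarrow> bool" where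
  "irreducible_mat A \<longleftrightarrow> \<not> reducible A"

definition allones_mat :: "real ^ 'n ^ 'n" ("E\<^sub>m") where
  "allones_mat = (\<chi> i j. 1)"

end

theory Submission
  imports Defs
begin

text \<open>Centred at the centre of the sphere, the points become unit vectors \<open>u\<^sub>i\<close> with
  \<open>D\<^sub>i\<^sub>j = 2 - 2\<langle>u\<^sub>i, u\<^sub>j\<rangle>\<close>, so \<open>D\<^sub>i\<^sub>j \<ge> 2\<close> makes the family obtuse, and
  \<open>\<Delta>\<^sub>i\<^sub>j = -\<langle>u\<^sub>i, u\<^sub>j\<rangle>\<close> off the diagonal, so irreducibility of \<open>\<Delta>\<close> says that the graph
  of nonzero inner products is connected. In an obtuse family, nonnegative combinations with
  disjoint supports have nonpositive inner product; splitting a vanishing combination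
  \<open>\<Sum> a\<^sub>i u\<^sub>i = 0\<close> into its positive and negative parts and using connectivity shows that
  \<open>a\<close> is positive everywhere or nowhere. With \<open>\<Sum> a\<^sub>i = 0\<close> this is affine independence,
  which passes to every realization \<open>p\<close> of \<open>D\<close> because \<open>a\<^sup>T D a = -2 \<parallel>\<Sum> a\<^sub>i p\<^sub>i\<parallel>\<^sup>2\<close>
  whenever \<open>\<Sum> a\<^sub>i = 0\<close>. Finally \<open>D w = e\<close> says \<open>\<langle>u\<^sub>k, v\<rangle> = \<sigma> - 1/2\<close> for
  \<open>v = \<Sum> w\<^sub>i u\<^sub>i\<close> and \<open>\<sigma> = \<Sum> w\<^sub>i\<close>: a positive constant forces \<open>w > 0\<close> directly, a zero
  one forces \<open>v = 0\<close> and then \<open>w > 0\<close> by the sign argument, and a negative one would force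
  \<open>w < 0\<close> and then \<open>(\<sigma> - 1/2) \<sigma> = \<parallel>v\<parallel>\<^sup>2 \<le> \<sigma>\<^sup>2\<close>, which is impossible.\<close>

definition obtuse_family :: "('i \<Rightarrow> 'a::real_inner) \<Rightarrow> bool" where
  "obtuse_family u \<longleftrightarrow> (\<forall>i j. i \<noteq> j \<longrightarrow> inner (u i) (u j) \<le> 0)"

definition gram_connected :: "('i \<Rightarrow> 'a::real_inner) \<Rightarrow> bool" where
  "gram_connected u \<longleftrightarrow>
     (\<forall>S. S \<noteq> {} \<longrightarrow> S \<noteq> UNIV \<longrightarrow> (\<exists>i j. i \<notin> S \<and> j \<in> S \<and> inner (u i) (u j) \<noteq> 0))"

definition affine_indep_family :: "('i::finite \<Rightarrow> 'a::real_vector) \<Rightarrow> bool" where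
  "affine_indep_family p \<longleftrightarrow>
     (\<forall>a. sum a UNIV = 0 \<longrightarrow> (\<Sum>i\<in>UNIV. a i *\<^sub>R p i) = 0 \<longrightarrow> (\<forall>i. a i = 0))"

lemma sum_UNIV_split:
  fixes f :: "'i::finite \<Rightarrow> 'a::comm_monoid_add"
  shows "sum f UNIV = sum f P + sum f (- P)"
  using sum.Int_Diff[of UNIV f P] by (simp add: Compl_eq_Diff_UNIV)

lemma obtuse_family_inner_sum_nonpos:
  assumes "obtuse_family u" "A \<inter> B = {}"
    and "\<And>i. i \<in> A \<Longrightarrow> a i \<ge> 0" "\<And>j. j \<in> B \<Longrightarrow> b j \<ge> 0"
  shows "inner (\<Sum>i\<in>A. a i *\<^sub>R u i) (\<Sum>j\<in>B. b j *\<^sub>R u j) \<le> 0"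
proof -
  have "inner (\<Sum>i\<in>A. a i *\<^sub>R u i) (\<Sum>j\<in>B. b j *\<^sub>R u j)
      = (\<Sum>j\<in>B. \<Sum>i\<in>A. b j * a i * inner (u i) (u j))"
    by (simp add: inner_sum_left inner_sum_right sum_distrib_left mult.assoc)
  also have "\<dots> \<le> 0"
    using assms unfolding obtuse_family_def
    by (intro sum_nonpos mult_nonneg_nonpos mult_nonneg_nonneg) (auto, metis disjoint_iff)
  finally show ?thesis .
qed

lemma obtuse_family_vanishing_combination_sign:
  fixes u :: "'i::finite \<Rightarrow> 'a::real_inner"
  assumes obtuse: "obtuse_family u" and connected: "gram_connected u"
    and vanish: "(\<Sum>i\<in>UNIV. a i *\<^sub>R u i) = 0"
  shows "{i. a i > 0} = {} \<or> {i. a i > 0} = UNIV"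
proof (rule ccontr)
  define P where "P = {i. a i > 0}"
  define vp where "vp = (\<Sum>i\<in>P. a i *\<^sub>R u i)"
  assume "\<not> ?thesis"
  then have "P \<noteq> {}" "P \<noteq> UNIV" by (simp_all add: P_def)
  then obtain k j where kj: "k \<notin> P" "j \<in> P" "inner (u k) (u j) \<noteq> 0"
    using connected unfolding gram_connected_def by blast
  have "vp + (\<Sum>i\<in>-P. a i *\<^sub>R u i) = 0"
    using vanish unfolding vp_def sum_UNIV_split[of _ P] .
  then have "vp = (\<Sum>i\<in>-P. (- a i) *\<^sub>R u i)"
    by (simp add: sum_negf eq_neg_iff_add_eq_0)
  then have "inner vp vp \<le> 0"
    using obtuse_family_inner_sum_nonpos[OF obtuse, of P "-P" a "\<lambda>i. - a i"]
    by (simp add: vp_def P_def)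
  then have "vp = 0" by (metis inner_eq_zero_iff inner_ge_zero order_antisym)
  then have "inner (u k) vp = 0" by simp
  then have "(\<Sum>i\<in>P. - (a i * inner (u k) (u i))) = 0"
    by (simp add: vp_def inner_sum_right sum_negf)
  moreover have "- (a i * inner (u k) (u i)) \<ge> 0" if "i \<in> P" for i
  proof -
    have "k \<noteq> i" "a i > 0" using that kj(1) by (auto simp: P_def)
    then show ?thesis using obtuse by (simp add: obtuse_family_def mult_nonneg_nonpos)
  qed
  ultimately have "a j * inner (u k) (u j) = 0"
    using kj(2) by (simp add: sum_nonneg_eq_0_iff)
  then show False using kj by (simp add: P_def)
qed

lemma obtuse_family_pos_if_inner_const_pos:
  fixes u :: "'i::finite \<Rightarrow> 'a::real_inner"
  assumes obtuse: "obtuse_family u"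
    and const: "\<And>k. inner (u k) (\<Sum>i\<in>UNIV. w i *\<^sub>R u i) = \<beta>" and "\<beta> > 0"
  shows "w i > 0"
proof -
  define N where "N = {i. w i < 0}"
  define vn where "vn = (\<Sum>i\<in>N. (- w i) *\<^sub>R u i)"
  define vp where "vp = (\<Sum>i\<in>-N. w i *\<^sub>R u i)"
  have "(\<Sum>i\<in>UNIV. w i *\<^sub>R u i) = vp - vn"
    using sum_UNIV_split[of "\<lambda>i. w i *\<^sub>R u i" N] by (simp add: vp_def vn_def sum_negf)
  then have "inner vn (\<Sum>i\<in>UNIV. w i *\<^sub>R u i) \<le> inner vn vp"
    by (simp add: inner_diff_right)
  also have "\<dots> \<le> 0"
    unfolding vn_def vp_def by (rule obtuse_family_inner_sum_nonpos[OF obtuse]) (auto simp: N_def)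
  finally have "inner vn (\<Sum>i\<in>UNIV. w i *\<^sub>R u i) \<le> 0" .
  moreover have "inner vn (\<Sum>i\<in>UNIV. w i *\<^sub>R u i) = \<beta> * (\<Sum>i\<in>N. - w i)"
    by (simp add: vn_def inner_sum_left const sum_distrib_left mult.commute)
  ultimately have "(\<Sum>i\<in>N. - w i) \<le> 0"
    using \<open>\<beta> > 0\<close> by (simp add: mult_le_0_iff)
  moreover have "N \<noteq> {} \<Longrightarrow> (\<Sum>i\<in>N. - w i) > 0"
    by (intro sum_pos) (auto simp: N_def)
  ultimately have "N = {}" by linarith
  then have nonneg: "w j \<ge> 0" for j by (auto simp: N_def not_less)
  show "w i > 0"
  proof (rule ccontr)
    assume "\<not> w i > 0"
    then have "w i = 0" using nonneg[of i] by simp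
    then have "w j * inner (u i) (u j) \<le> 0" for j
      using nonneg[of j] obtuse by (cases "i = j") (auto simp: obtuse_family_def mult_nonneg_nonpos)
    then have "(\<Sum>j\<in>UNIV. w j * inner (u i) (u j)) \<le> 0"
      by (rule sum_nonpos)
    then show False
      using const[of i] \<open>\<beta> > 0\<close> by (simp add: inner_sum_right)
  qed
qed

lemma affine_indep_family_if_obtuse_gram_connected:
  fixes u :: "'i::finite \<Rightarrow> 'a::real_inner"
  assumes "obtuse_family u" "gram_connected u"
  shows "affine_indep_family u"
  unfolding affine_indep_family_def
proof (intro allI impI)
  fix a :: "'i \<Rightarrow> real" and i
  assume sum0: "sum a UNIV = 0" and vanish: "(\<Sum>i\<in>UNIV. a i *\<^sub>R u i) = 0"
  have no_pos: "{i. c i > 0} = {}" if c: "c = a \<or> c = (\<lambda>i. - a i)" for c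
  proof -
    have c0: "(\<Sum>i\<in>UNIV. c i *\<^sub>R u i) = 0" "sum c UNIV = 0"
      using c vanish sum0 by (auto simp: sum_negf)
    have "{i. c i > 0} \<noteq> UNIV"
    proof
      assume "{i. c i > 0} = UNIV"
      then have "sum c UNIV > 0" by (intro sum_pos) auto
      with c0(2) show False by simp
    qed
    then show ?thesis
      using obtuse_family_vanishing_combination_sign[OF assms c0(1)] by blast
  qed
  have "\<not> a i > 0" "\<not> - a i > 0"
    using no_pos[of a] no_pos[of "\<lambda>i. - a i"] by blast+
  then show "a i = 0" by linarith
qed

lemma realizes_edm_quadratic_form:
  fixes q :: "'n::finite \<Rightarrow> real ^ 'n"
  assumes "realizes_edm q D" "sum a UNIV = 0"
  shows "(\<Sum>i\<in>UNIV. \<Sum>j\<in>UNIV. a i * a j * D $ i $ j) = -2 * (norm (\<Sum>i\<in>UNIV. a i *\<^sub>R q i))\<^sup>2"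
proof -
  have entry: "D $ i $ j = inner (q i) (q i) + inner (q j) (q j) - 2 * inner (q i) (q j)" for i j
    using assms(1) unfolding realizes_edm_def power2_norm_eq_inner
    by (simp add: inner_diff_left inner_diff_right inner_commute)
  have diag_i: "(\<Sum>i\<in>UNIV. \<Sum>j\<in>UNIV. a i * a j * inner (q i) (q i)) = 0"
    using assms(2) by (simp add: sum_distrib_right[symmetric] sum_distrib_left[symmetric] mult.commute mult.left_commute)
  have diag_j: "(\<Sum>i\<in>UNIV. \<Sum>j\<in>UNIV. a i * a j * inner (q j) (q j)) = 0"
    using assms(2) by (subst sum.swap) (simp add: sum_distrib_right[symmetric] sum_distrib_left[symmetric] mult.commute mult.left_commute)
  have "(norm (\<Sum>i\<in>UNIV. a i *\<^sub>R q i))\<^sup>2 = (\<Sum>i\<in>UNIV. \<Sum>j\<in>UNIV. a i * a j * inner (q i) (q j))"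
    unfolding power2_norm_eq_inner
    by (simp add: inner_sum_left inner_sum_right sum_distrib_left ac_simps)
      (subst sum.swap, simp add: ac_simps)
  moreover have "(\<Sum>i\<in>UNIV. \<Sum>j\<in>UNIV. a i * a j * D $ i $ j) =
     (\<Sum>i\<in>UNIV. \<Sum>j\<in>UNIV. a i * a j * inner (q i) (q i)) + (\<Sum>i\<in>UNIV. \<Sum>j\<in>UNIV. a i * a j * inner (q j) (q j))
     - 2 * (\<Sum>i\<in>UNIV. \<Sum>j\<in>UNIV. a i * a j * inner (q i) (q j))"
    unfolding entry by (simp add: algebra_simps sum.distrib sum_subtractf sum_distrib_left)
  ultimately show ?thesis using diag_i diag_j by simp
qed

lemma affine_indep_family_realizes_edm:
  fixes p q :: "'n::finite \<Rightarrow> real ^ 'n"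
  assumes "realizes_edm p D" "realizes_edm q D" "affine_indep_family p"
  shows "affine_indep_family q"
  unfolding affine_indep_family_def
proof (intro allI impI)
  fix a :: "'n \<Rightarrow> real" and i
  assume sum0: "sum a UNIV = 0" and "(\<Sum>i\<in>UNIV. a i *\<^sub>R q i) = 0"
  then have "(\<Sum>i\<in>UNIV. a i *\<^sub>R p i) = 0"
    using realizes_edm_quadratic_form[OF assms(1) sum0] realizes_edm_quadratic_form[OF assms(2) sum0]
    by simp
  then show "a i = 0"
    using assms(3) sum0 unfolding affine_indep_family_def by blast
qed

lemma aff_dim_range_affine_indep_family:
  fixes p :: "'i::finite \<Rightarrow> 'a::euclidean_space"
  assumes indep: "affine_indep_family p"
  shows "aff_dim (range p) = int CARD('i) - 1"
proof -
  have "inj p"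
  proof (rule injI)
    fix i j assume "p i = p j"
    define a :: "'i \<Rightarrow> real" where "a k = (if k = i then 1 else 0) - (if k = j then 1 else 0)" for k
    have "sum a UNIV = 0" "(\<Sum>k\<in>UNIV. a k *\<^sub>R p k) = 0"
      using \<open>p i = p j\<close>
      by (simp_all add: a_def sum_subtractf scaleR_left_diff_distrib if_distrib[of "\<lambda>c. c *\<^sub>R _"] cong: if_cong)
    then have "a i = 0" using indep unfolding affine_indep_family_def by blast
    then show "i = j" by (simp add: a_def split: if_splits)
  qed
  have "\<not> affine_dependent (range p)"
  proof
    assume "affine_dependent (range p)"
    then obtain U where U: "sum U (range p) = 0" "\<exists>v\<in>range p. U v \<noteq> 0"
        "(\<Sum>v\<in>range p. U v *\<^sub>R v) = 0"
      using affine_dependent_explicit_finite[of "range p"] by auto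
    have "sum (U \<circ> p) UNIV = 0" "(\<Sum>i\<in>UNIV. (U \<circ> p) i *\<^sub>R p i) = 0"
      using U(1,3) sum.reindex[OF \<open>inj p\<close>, of U] sum.reindex[OF \<open>inj p\<close>, of "\<lambda>v. U v *\<^sub>R v"]
      by simp_all
    then have "\<forall>i. U (p i) = 0" using indep unfolding affine_indep_family_def by auto
    with U(2) show False by auto
  qed
  then have "int (card (range p)) = aff_dim (range p) + 1"
    by (rule aff_dim_affine_independent)
  with card_image[OF \<open>inj p\<close>] show ?thesis by simp
qed

lemma edm_embedding_dim_if_affine_indep_realization:
  fixes p :: "'n::finite \<Rightarrow> real ^ 'n"
  assumes "realizes_edm p D" "affine_indep_family p"
  shows "edm_embedding_dim D = int CARD('n) - 1"
proof -
  define q where "q = (SOME q :: 'n \<Rightarrow> real ^ 'n. realizes_edm q D)"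
  have "realizes_edm q D"
    unfolding q_def using assms(1) by (rule someI[of "\<lambda>q. realizes_edm q D"])
  then have "affine_indep_family q"
    using affine_indep_family_realizes_edm assms by blast
  then show ?thesis
    unfolding edm_embedding_dim_def q_def[symmetric] by (rule aff_dim_range_affine_indep_family)
qed

lemma unit_spherical_edm_centred_realization:
  assumes "is_unit_spherical_edm D"
  obtains u where "realizes_edm u D" "\<And>i. norm (u i) = 1"
proof -
  obtain p c where p: "realizes_edm p D" "\<forall>i. dist c (p i) = 1"
    using assms unfolding is_unit_spherical_edm_def by blast
  show ?thesis
  proof
    show "realizes_edm (\<lambda>i. p i - c) D" using p(1) by (simp add: realizes_edm_def)
    show "norm (p i - c) = 1" for i using p(2) by (simp add: dist_norm norm_minus_commute)
  qed
qed

lemma realizes_edm_unit_entry: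
  assumes "realizes_edm u D" "\<And>i. norm (u i) = 1"
  shows "D $ i $ j = 2 - 2 * inner (u i) (u j)"
proof -
  have "inner (u k) (u k) = 1" for k using assms(2)[of k] by (simp add: norm_eq_1)
  then show ?thesis
    using assms(1) unfolding realizes_edm_def power2_norm_eq_inner
    by (simp add: inner_diff_left inner_diff_right inner_commute)
qed

lemma realizes_edm_unit_mult_vec:
  assumes "realizes_edm u D" "\<And>i. norm (u i) = 1"
  shows "(D *v w) $ k = 2 * (\<Sum>j\<in>UNIV. w $ j) - 2 * inner (u k) (\<Sum>j\<in>UNIV. w $ j *\<^sub>R u j)"
proof -
  have "(D *v w) $ k = (\<Sum>j\<in>UNIV. (2 - 2 * inner (u k) (u j)) * w $ j)"
    by (simp add: matrix_vector_mult_def realizes_edm_unit_entry[OF assms])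
  also have "\<dots> = 2 * (\<Sum>j\<in>UNIV. w $ j) - 2 * inner (u k) (\<Sum>j\<in>UNIV. w $ j *\<^sub>R u j)"
    by (simp add: algebra_simps sum_subtractf sum_distrib_left inner_sum_right)
  finally show ?thesis .
qed

lemma obtuse_gram_connected_unit_solution_pos:
  fixes u :: "'i::finite \<Rightarrow> 'a::real_inner"
  assumes obtuse: "obtuse_family u" and connected: "gram_connected u"
    and unit: "\<And>i. norm (u i) = 1"
    and eq: "\<And>k. inner (u k) (\<Sum>i\<in>UNIV. w i *\<^sub>R u i) = sum w UNIV - 1/2"
  shows "w i > 0"
proof -
  define \<sigma> where "\<sigma> = sum w UNIV"
  define v where "v = (\<Sum>i\<in>UNIV. w i *\<^sub>R u i)"
  have "inner v v = (\<Sum>k\<in>UNIV. w k * inner (u k) v)"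
    unfolding v_def by (simp add: inner_sum_left)
  also have "\<dots> = (\<sigma> - 1/2) * \<sigma>"
    using eq by (simp add: v_def \<sigma>_def sum_distrib_right mult.commute)
  finally have vv: "inner v v = (\<sigma> - 1/2) * \<sigma>" .
  consider "\<sigma> > 1/2" | "\<sigma> = 1/2" | "\<sigma> < 1/2" by linarith
  then show ?thesis
  proof cases
    case 1
    then show ?thesis
      using obtuse_family_pos_if_inner_const_pos[OF obtuse eq] by (simp add: \<sigma>_def)
  next
    case 2
    then have "inner v v = 0" using vv by simp
    then have "v = 0" by simp
    then have "{i. w i > 0} = {} \<or> {i. w i > 0} = UNIV"
      using obtuse_family_vanishing_combination_sign[OF obtuse connected] by (simp add: v_def)
    moreover have "{i. w i > 0} \<noteq> {}"
    proof
      assume "{i. w i > 0} = {}"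
      then have "\<sigma> \<le> 0" unfolding \<sigma>_def by (intro sum_nonpos) (auto simp: not_less)
      with 2 show False by simp
    qed
    ultimately show ?thesis by auto
  next
    case 3
    have "inner (u k) (\<Sum>i\<in>UNIV. (- w i) *\<^sub>R u i) = 1/2 - \<sigma>" for k
      using eq[of k] by (simp add: sum_negf \<sigma>_def)
    then have neg: "w j < 0" for j
      using obtuse_family_pos_if_inner_const_pos[OF obtuse, of "\<lambda>i. - w i" "1/2 - \<sigma>" j] 3
      by simp
    have "0 < (\<Sum>i\<in>UNIV. - w i)"
      by (intro sum_pos) (auto simp: neg)
    then have "\<sigma> < 0"
      by (simp add: \<sigma>_def sum_negf)
    have "norm v \<le> (\<Sum>i\<in>UNIV. norm (w i *\<^sub>R u i))"
      unfolding v_def by (rule norm_sum)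
    also have "\<dots> = - \<sigma>"
      using neg unit by (simp add: \<sigma>_def sum_negf abs_of_neg)
    finally have "(norm v)\<^sup>2 \<le> (- \<sigma>)\<^sup>2"
      by (rule power_mono) simp
    then have "inner v v \<le> \<sigma>\<^sup>2"
      by (simp add: power2_norm_eq_inner)
    then have "(\<sigma> - 1/2) * \<sigma> \<le> \<sigma> * \<sigma>"
      by (simp add: vv power2_eq_square)
    with \<open>\<sigma> < 0\<close> show ?thesis by (simp add: algebra_simps)
  qed
qed

lemma ex_bij_initial_segment:
  fixes S :: "'i::finite set"
  obtains f where "bij_betw f UNIV {0..<CARD('i)}" "\<And>i. f i < card S \<longleftrightarrow> i \<in> S"
proof -
  obtain h where h: "bij_betw h S {0..<card S}"
    using ex_bij_betw_finite_nat[of S] by auto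
  obtain g where g: "bij_betw g (-S) {0..<card (-S)}"
    using ex_bij_betw_finite_nat[of "-S"] by auto
  have card: "card S + card (-S) = CARD('i)"
    using card_Un_disjoint[of S "-S"] by simp
  have shift: "bij_betw (plus (card S)) {0..<card (-S)} {card S..<CARD('i)}"
    using card by (simp add: bij_betw_def add.commute)
  have g': "bij_betw (\<lambda>i. card S + g i) (-S) {card S..<CARD('i)}"
    using bij_betw_trans[OF g shift] by (simp add: comp_def)
  have "bij_betw (\<lambda>i. if i \<in> S then h i else card S + g i) (S \<union> -S) ({0..<card S} \<union> {card S..<CARD('i)})"
    by (rule bij_betw_disjoint_Un[OF h g']) auto
  moreover have "{0..<card S} \<union> {card S..<CARD('i)} = {0..<CARD('i)}"
    using card by auto
  moreover have "(if i \<in> S then h i else card S + g i) < card S \<longleftrightarrow> i \<in> S" for i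
    using h g' unfolding bij_betw_def by auto
  ultimately show ?thesis using that by simp
qed

lemma irreducible_mat_crossing_entry:
  fixes A :: "real ^ 'n ^ 'n"
  assumes "irreducible_mat A" "CARD('n) \<ge> 2" "S \<noteq> {}" "S \<noteq> UNIV"
  shows "\<exists>i j. i \<notin> S \<and> j \<in> S \<and> A $ i $ j \<noteq> 0"
proof (rule ccontr)
  assume no_entry: "\<not> ?thesis"
  obtain f where f: "bij_betw f UNIV {0..<CARD('n)}" "\<And>i. f i < card S \<longleftrightarrow> i \<in> S"
    using ex_bij_initial_segment[of S] by blast
  have "0 < card S" using assms(3) by (simp add: card_gt_0_iff)
  moreover have "card S < CARD('n)" using assms(4) by (simp add: psubset_card_mono psubsetI)
  moreover have "A $ i $ j = 0" if "card S \<le> f i" "f j < card S" for i j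
    using no_entry f(2)[of i] f(2)[of j] that by auto
  ultimately have "reducible A"
    unfolding reducible_def using assms(2) f(1) by (intro disjI2 conjI exI) auto
  then show False using assms(1) by (simp add: irreducible_mat_def)
qed

lemma unit_realization_obtuse_family:
  fixes D :: "real ^ 'n ^ 'n"
  assumes "realizes_edm u D" "\<And>i. norm (u i) = 1"
    and "\<forall>i j. i \<noteq> j \<longrightarrow> D $ i $ j \<ge> 2"
  shows "obtuse_family u"
  unfolding obtuse_family_def
proof (intro allI impI)
  fix i j :: 'n assume "i \<noteq> j"
  then have "D $ i $ j \<ge> 2" using assms(3) by blast
  then show "inner (u i) (u j) \<le> 0"
    using realizes_edm_unit_entry[OF assms(1,2), of i j] by linarith
qed

lemma unit_realization_gram_connected:
  fixes D \<Delta> :: "real ^ 'n ^ 'n"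
  assumes "realizes_edm u D" "\<And>i. norm (u i) = 1"
    and "CARD('n) \<ge> 2" "D = 2 *\<^sub>R (E\<^sub>m - mat 1) + 2 *\<^sub>R \<Delta>" "irreducible_mat \<Delta>"
  shows "gram_connected u"
  unfolding gram_connected_def
proof (intro allI impI)
  fix S :: "'n set" assume "S \<noteq> {}" "S \<noteq> UNIV"
  then obtain i j where ij: "i \<notin> S" "j \<in> S" "\<Delta> $ i $ j \<noteq> 0"
    using irreducible_mat_crossing_entry[OF assms(5,3)] by blast
  then have "D $ i $ j = 2 + 2 * \<Delta> $ i $ j"
    by (auto simp: assms(4) allones_mat_def mat_def)
  then have "inner (u i) (u j) \<noteq> 0"
    using ij(3) realizes_edm_unit_entry[OF assms(1,2), of i j] by simp
  with ij show "\<exists>i j. i \<notin> S \<and> j \<in> S \<and> inner (u i) (u j) \<noteq> 0" by blast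
qed

theorem lemma4p3:
  fixes D \<Delta> :: "real ^ 'n ^ 'n" and w :: "real ^ 'n" and r :: int
  assumes "CARD('n) \<ge> 2"
    and "is_unit_spherical_edm D"
    and "edm_embedding_dim D = r"
    and "\<forall>i j. i \<noteq> j \<longrightarrow> D $ i $ j \<ge> 2"
    and "D = 2 *\<^sub>R (E\<^sub>m - mat 1) + 2 *\<^sub>R \<Delta>"
    and "D *v w = (\<chi> i. 1)"
    and "irreducible_mat \<Delta>"
  shows "r = int CARD('n) - 1 \<and> (\<forall>i. w $ i > 0)"
proof -
  obtain u where u: "realizes_edm u D" and unit: "\<And>i. norm (u i) = 1"
    using unit_spherical_edm_centred_realization[OF assms(2)] by blast
  have obtuse: "obtuse_family u"
    using u unit assms(4) by (rule unit_realization_obtuse_family)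
  have connected: "gram_connected u"
    using u unit assms(1,5,7) by (rule unit_realization_gram_connected)
  have "r = int CARD('n) - 1"
    using edm_embedding_dim_if_affine_indep_realization[OF u] assms(3)
      affine_indep_family_if_obtuse_gram_connected[OF obtuse connected] by simp
  moreover have "w $ i > 0" for i
  proof (rule obtuse_gram_connected_unit_solution_pos[OF obtuse connected unit])
    show "inner (u k) (\<Sum>j\<in>UNIV. w $ j *\<^sub>R u j) = (\<Sum>j\<in>UNIV. w $ j) - 1/2" for k
      using realizes_edm_unit_mult_vec[OF u unit, of w k] assms(6) by simp
  qed
  ultimately show ?thesis by blast
qed

end
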